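(* Let $\mathbb{X}\subseteq\mathbb{P}^2$ be a $\Bbbk$-configuration of type $(d_1,\dots,d_s)$ defined by subsets $\mathbb{X}_1,\dots,\mathbb{X}_s$ and lines $\mathbb{L}_1,\dots,\mathbb{L}_s$, and let $\mathbb{L}$ be a line with $|\mathbb{L}\cap\mathbb{X}|=d_s$. (i) If $d_s>s$, then $\mathbb{L}\in\{\mathbb{L}_1,\dots,\mathbb{L}_s\}$. (ii) If $\mathbb{L}=\mathbb{L}_i$, then $d_j=d_s-s+j$ for all $j=i,\dots,s$.
   Context: $\Bbbk$ is an algebraically closed field. A $\Bbbk$-configuration of type $(d_1,\dots,d_s)$ is a finite set $\mathbb{X}\subseteq\mathbb{P}^2$ for which there exist integers $1\le d_1<\cdots<d_s$, subsets $\mathbb{X}_1,\dots,\mathbb{X}_s$ of $\mathbb{X}$ and distinct lines $\mathbb{L}_1,\dots,\mathbb{L}_s\subseteq\mathbb{P}^2$ such that (1) $\mathbb{X}=\bigcup_{i=1}^s\mathbb{X}_i$; (2) $|\mathbb{X}_i|=d_i$ and $\mathbb{X}_i\subseteq\mathbb{L}_i$ for each $i$; (3) for $1<i\le s$, $\mathbb{L}_i$ contains no point of $\mathbb{X}_j$ for any $j<i$. We say $\mathbb{X}$ is defined by these subsets and lines. *)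

theory Defs
  imports "HOL-Computational_Algebra.Polynomial"
begin

definition alg_closed :: "'k::field itself \<Rightarrow> bool" where
  "alg_closed _ \<longleftrightarrow> (\<forall>p :: 'k poly. degree p \<ge> 1 \<longrightarrow> (\<exists>x. poly p x = 0))"

text \<open>Points of the projective plane P^2 over 'k: one-dimensional subspaces of k^3,
  i.e. the sets of all scalar multiples of a nonzero vector.\<close>
type_synonym 'k ppoint = "('k \<times> 'k \<times> 'k) set"

definition scale3 :: "'k::field \<Rightarrow> 'k \<times> 'k \<times> 'k \<Rightarrow> 'k \<times> 'k \<times> 'k" where
  "scale3 c v = (case v of (x, y, z) \<Rightarrow> (c * x, c * y, c * z))"

definition is_point :: "'k::field ppoint \<Rightarrow> bool" where
  "is_point P \<longleftrightarrow> (\<exists>v. v \<noteq> (0, 0, 0) \<and> P = (\<lambda>c. scale3 c v) ` UNIV)"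

definition line_of :: "'k::field \<times> 'k \<times> 'k \<Rightarrow> 'k ppoint set" where
  "line_of u = {P. is_point P \<and> (\<forall>(x, y, z) \<in> P. (case u of (a, b, c) \<Rightarrow> a * x + b * y + c * z = 0))}"

definition is_line :: "'k::field ppoint set \<Rightarrow> bool" where
  "is_line L \<longleftrightarrow> (\<exists>u. u \<noteq> (0, 0, 0) \<and> L = line_of u)"

definition kconfig ::
  "'k::field ppoint set \<Rightarrow> nat \<Rightarrow> (nat \<Rightarrow> nat) \<Rightarrow> (nat \<Rightarrow> 'k ppoint set) \<Rightarrow> (nat \<Rightarrow> 'k ppoint set) \<Rightarrow> bool"
where
  "kconfig X s d Xs Ls \<longleftrightarrow>
     s \<ge> 1 \<and> 1 \<le> d 1 \<and> (\<forall>i\<in>{1..s}. \<forall>j\<in>{1..s}. i < j \<longrightarrow> d i < d j) \<and>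
     X = (\<Union>i\<in>{1..s}. Xs i) \<and>
     (\<forall>i\<in>{1..s}. is_line (Ls i) \<and> finite (Xs i) \<and> card (Xs i) = d i \<and> Xs i \<subseteq> Ls i) \<and>
     inj_on Ls {1..s} \<and>
     (\<forall>i\<in>{1..s}. \<forall>j\<in>{1..s}. j < i \<longrightarrow> Ls i \<inter> Xs j = {})"

end

theory Submission imports Defs begin

text \<open>Two distinct lines of \<open>\<P>\<^sup>2\<close> share at most one point: a common point is orthogonal to
  both coefficient vectors, and if there were two of them, \<open>p\<close> and \<open>q\<close>, both coefficient
  vectors would be multiples of \<open>p \<times> q\<close> and the lines would coincide.
  Hence a line \<open>L\<close> different from all \<open>\<L>\<^sub>i\<close> meets each \<open>\<X>\<^sub>i\<close> in at most one point, so
  \<open>|L \<inter> \<X>| \<le> s\<close>. If \<open>L = \<L>\<^sub>i\<close>, then \<open>L\<close> misses \<open>\<X>\<^sub>1, \<dots>, \<X>\<^sub>i\<^sub>-\<^sub>1\<close> and meets each \<open>\<X>\<^sub>k\<close>,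
  \<open>k > i\<close>, at most once, so \<open>d\<^sub>s \<le> d\<^sub>i + (s - i)\<close>; since the \<open>d\<^sub>j\<close> strictly increase, this
  forces \<open>d\<^sub>j = d\<^sub>i + (j - i)\<close> for all \<open>j \<ge> i\<close>.\<close>

definition dot3 :: "'k::field \<times> 'k \<times> 'k \<Rightarrow> 'k \<times> 'k \<times> 'k \<Rightarrow> 'k" where
  "dot3 u v = (case u of (a, b, c) \<Rightarrow> case v of (x, y, z) \<Rightarrow> a * x + b * y + c * z)"

definition cross3 :: "'k::field \<times> 'k \<times> 'k \<Rightarrow> 'k \<times> 'k \<times> 'k \<Rightarrow> 'k \<times> 'k \<times> 'k" where
  "cross3 u v = (case u of (a, b, c) \<Rightarrow> case v of (x, y, z) \<Rightarrow> (b * z - c * y, c * x - a * z, a * y - b * x))"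

lemma dot3_scale_right: "dot3 u (scale3 c v) = c * dot3 u v"
  by (cases u; cases v) (simp add: dot3_def scale3_def algebra_simps)

lemma dot3_scale_left: "dot3 (scale3 c u) v = c * dot3 u v"
  by (cases u; cases v) (simp add: dot3_def scale3_def algebra_simps)

lemma scale3_scale3: "scale3 a (scale3 b v) = scale3 (a * b) v"
  by (cases v) (simp add: scale3_def mult.assoc)

lemma scale3_eq_0_iff: "scale3 c v = (0, 0, 0) \<longleftrightarrow> c = 0 \<or> v = (0, 0, 0)"
  by (cases v) (auto simp: scale3_def)

lemma cross3_eq_0_imp_scale3:
  fixes r v :: "'k::field \<times> 'k \<times> 'k"
  assumes "cross3 r v = (0, 0, 0)" and "r \<noteq> (0, 0, 0)"
  shows "\<exists>c. v = scale3 c r"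
proof -
  obtain r1 r2 r3 where r: "r = (r1, r2, r3)" by (cases r) auto
  obtain v1 v2 v3 where v: "v = (v1, v2, v3)" by (cases v) auto
  have eqs: "r2 * v3 = r3 * v2" "r3 * v1 = r1 * v3" "r1 * v2 = r2 * v1"
    using assms(1) by (auto simp: r v cross3_def)
  consider "r1 \<noteq> 0" | "r1 = 0" "r2 \<noteq> 0" | "r1 = 0" "r2 = 0" "r3 \<noteq> 0"
    using assms(2) r by blast
  then show ?thesis
  proof cases
    case 1
    with eqs show ?thesis by (intro exI[of _ "v1 / r1"]) (auto simp: r v scale3_def field_simps)
  next
    case 2
    with eqs show ?thesis by (intro exI[of _ "v2 / r2"]) (auto simp: r v scale3_def field_simps)
  next
    case 3
    with eqs show ?thesis by (intro exI[of _ "v3 / r3"]) (auto simp: r v scale3_def field_simps)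
  qed
qed

lemma cross3_eq_0_imp_same_point:
  fixes p q :: "'k::field \<times> 'k \<times> 'k"
  assumes "cross3 p q = (0, 0, 0)" and "p \<noteq> (0, 0, 0)" and "q \<noteq> (0, 0, 0)"
  shows "range (\<lambda>c. scale3 c p) = range (\<lambda>c. scale3 c q)"
proof -
  obtain c where q: "q = scale3 c p" using cross3_eq_0_imp_scale3 assms(1,2) by blast
  with assms(3) have "c \<noteq> 0" by (simp add: scale3_eq_0_iff)
  have "scale3 a p \<in> range (\<lambda>b. scale3 (b * c) p)" for a
    using \<open>c \<noteq> 0\<close> by (intro image_eqI[of _ _ "a / c"]) auto
  then show ?thesis by (auto simp: q scale3_scale3)
qed

lemma orthogonal_to_both_imp_cross3_eq_0:
  fixes p q x :: "'k::field \<times> 'k \<times> 'k"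
  assumes "dot3 x p = 0" and "dot3 x q = 0"
  shows "cross3 (cross3 p q) x = (0, 0, 0)"
proof -
  obtain x1 x2 x3 where x: "x = (x1, x2, x3)" by (cases x) auto
  obtain p1 p2 p3 where p: "p = (p1, p2, p3)" by (cases p) auto
  obtain q1 q2 q3 where q: "q = (q1, q2, q3)" by (cases q) auto
  have h: "x1 * p1 + x2 * p2 + x3 * p3 = 0" "x1 * q1 + x2 * q2 + x3 * q3 = 0"
    using assms by (auto simp: dot3_def x p q)
  have "(p3 * q1 - p1 * q3) * x3 - (p1 * q2 - p2 * q1) * x2 = 0"
       "(p1 * q2 - p2 * q1) * x1 - (p2 * q3 - p3 * q2) * x3 = 0"
       "(p2 * q3 - p3 * q2) * x2 - (p3 * q1 - p1 * q3) * x1 = 0"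
    using h by algebra+
  then show ?thesis by (simp add: cross3_def x p q)
qed

lemma point_in_line_of_iff:
  assumes "P = range (\<lambda>c. scale3 c p)" and "p \<noteq> (0, 0, 0)"
  shows "P \<in> line_of u \<longleftrightarrow> dot3 u p = 0"
proof -
  have "is_point P" using assms unfolding is_point_def by blast
  have "p \<in> P"
    using assms(1) by (auto simp: image_iff scale3_def intro!: exI[of _ 1] split: prod.splits)
  have "(\<forall>(x, y, z) \<in> P. case u of (a, b, c) \<Rightarrow> a * x + b * y + c * z = 0) \<longleftrightarrow> (\<forall>v\<in>P. dot3 u v = 0)"
    by (cases u) (auto simp: dot3_def)
  also have "\<dots> \<longleftrightarrow> dot3 u p = 0"
    using \<open>p \<in> P\<close> by (auto simp: assms(1) dot3_scale_right)
  finally show ?thesis using \<open>is_point P\<close> by (simp add: line_of_def)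
qed

lemma line_of_scale3: "c \<noteq> 0 \<Longrightarrow> line_of (scale3 c u) = line_of u"
proof -
  assume "c \<noteq> 0"
  then have "dot3 (scale3 c u) v = 0 \<longleftrightarrow> dot3 u v = 0" for v by (simp add: dot3_scale_left)
  from this[of "(x, y, z)" for x y z]
  have "(case scale3 c u of (a, b, d) \<Rightarrow> a * x + b * y + d * z = 0) \<longleftrightarrow>
        (case u of (a, b, d) \<Rightarrow> a * x + b * y + d * z = 0)" for x y z
    by (cases u) (simp add: dot3_def scale3_def)
  then show ?thesis by (simp add: line_of_def)
qed

lemma distinct_lines_common_point_unique:
  fixes A B :: "'k::field ppoint set"
  assumes "is_line A" "is_line B" "A \<noteq> B" "P \<in> A" "P \<in> B" "Q \<in> A" "Q \<in> B"
  shows "P = Q"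
proof (rule ccontr)
  assume "P \<noteq> Q"
  obtain u where u: "u \<noteq> (0, 0, 0)" "A = line_of u" using assms(1) is_line_def by blast
  obtain w where w: "w \<noteq> (0, 0, 0)" "B = line_of w" using assms(2) is_line_def by blast
  have "is_point P" "is_point Q" using assms(4,6) u by (simp_all add: line_of_def)
  then obtain p q where p: "p \<noteq> (0, 0, 0)" "P = range (\<lambda>c. scale3 c p)"
    and q: "q \<noteq> (0, 0, 0)" "Q = range (\<lambda>c. scale3 c q)"
    unfolding is_point_def by blast
  have "dot3 u p = 0" "dot3 u q = 0" "dot3 w p = 0" "dot3 w q = 0"
    using assms(4-7) u w point_in_line_of_iff[OF p(2,1)] point_in_line_of_iff[OF q(2,1)] by auto
  then have "cross3 (cross3 p q) u = (0, 0, 0)" "cross3 (cross3 p q) w = (0, 0, 0)"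
    by (simp_all add: orthogonal_to_both_imp_cross3_eq_0)
  moreover have "cross3 p q \<noteq> (0, 0, 0)"
    using cross3_eq_0_imp_same_point[OF _ p(1) q(1)] p q \<open>P \<noteq> Q\<close> by auto
  ultimately obtain a b where "u = scale3 a (cross3 p q)" "w = scale3 b (cross3 p q)"
    using cross3_eq_0_imp_scale3 by metis
  with u w have "A = B" by (auto simp: scale3_eq_0_iff line_of_scale3)
  with assms(3) show False ..
qed

lemma card_inter_distinct_lines_le_1:
  fixes A B :: "'k::field ppoint set"
  assumes "is_line A" "is_line B" "A \<noteq> B" "S \<subseteq> A \<inter> B"
  shows "card S \<le> 1"
proof (cases "finite S")
  case True
  with assms distinct_lines_common_point_unique[OF assms(1-3)] show ?thesis
    by (auto simp: card_le_Suc0_iff_eq subset_iff)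
qed simp

lemma kconfig_type_increase:
  assumes "kconfig X s d Xs Ls" "1 \<le> a" "a \<le> b" "b \<le> s"
  shows "d a + (b - a) \<le> d b"
  using assms(3,4)
proof (induction b rule: dec_induct)
  case (step n)
  have "d n < d (Suc n)" using assms(1,2) step by (auto simp: kconfig_def)
  with step show ?case by simp
qed simp

lemma kconfig_card_line_inter_Union_le:
  assumes "kconfig X s d Xs Ls" "is_line L" "K \<subseteq> {1..s}" "\<forall>k\<in>K. L \<noteq> Ls k"
  shows "card (\<Union>k\<in>K. L \<inter> Xs k) \<le> card K"
proof -
  have "finite K" using assms(3) finite_subset by blast
  then have "card (\<Union>k\<in>K. L \<inter> Xs k) \<le> (\<Sum>k\<in>K. card (L \<inter> Xs k))"
    by (rule card_UN_le)
  also have "\<dots> \<le> (\<Sum>k\<in>K. 1)"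
  proof (rule sum_mono)
    fix k assume "k \<in> K"
    with assms have "is_line (Ls k)" "Xs k \<subseteq> Ls k" "L \<noteq> Ls k"
      by (auto simp: kconfig_def)
    then show "card (L \<inter> Xs k) \<le> 1"
      using card_inter_distinct_lines_le_1[OF assms(2)] by blast
  qed
  finally show ?thesis by simp
qed

lemma kconfig_line_not_defining_card_le:
  assumes "kconfig X s d Xs Ls" "is_line L" "L \<notin> Ls ` {1..s}"
  shows "card (L \<inter> X) \<le> s"
proof -
  have "L \<inter> X = (\<Union>k\<in>{1..s}. L \<inter> Xs k)" using assms(1) by (auto simp: kconfig_def)
  with kconfig_card_line_inter_Union_le[OF assms(1,2), of "{1..s}"] assms(3) show ?thesis
    by auto
qed

lemma kconfig_defining_line_card_le:
  assumes "kconfig X s d Xs Ls" "i \<in> {1..s}" "L = Ls i"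
  shows "card (L \<inter> X) \<le> d i + (s - i)"
proof -
  have Xs_i: "card (Xs i) = d i" "is_line L" and fin: "\<forall>k\<in>{1..s}. finite (Xs k)"
    using assms by (auto simp: kconfig_def)
  have "\<forall>k\<in>{i+1..s}. L \<noteq> Ls k"
    using assms by (auto simp: kconfig_def dest: inj_onD)
  then have tail: "card (\<Union>k\<in>{i+1..s}. L \<inter> Xs k) \<le> s - i"
    using kconfig_card_line_inter_Union_le[OF assms(1) \<open>is_line L\<close>, of "{i+1..s}"] assms(2) by auto
  have "L \<inter> X \<subseteq> Xs i \<union> (\<Union>k\<in>{i+1..s}. L \<inter> Xs k)"
  proof
    fix x assume "x \<in> L \<inter> X"
    then obtain k where k: "k \<in> {1..s}" "x \<in> Xs k" "x \<in> L"
      using assms(1) by (auto simp: kconfig_def)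
    \<comment> \<open>\<open>L = \<L>\<^sub>i\<close> contains no point of the earlier \<open>\<X>\<^sub>k\<close>.\<close>
    have "\<not> k < i" using k assms unfolding kconfig_def by blast
    with k show "x \<in> Xs i \<union> (\<Union>k\<in>{i+1..s}. L \<inter> Xs k)"
      by (cases "k = i") auto
  qed
  then have "card (L \<inter> X) \<le> card (Xs i \<union> (\<Union>k\<in>{i+1..s}. L \<inter> Xs k))"
    by (rule card_mono[rotated]) (use fin assms(2) in auto)
  also have "\<dots> \<le> card (Xs i) + card (\<Union>k\<in>{i+1..s}. L \<inter> Xs k)"
    by (rule card_Un_le)
  finally show ?thesis using Xs_i tail by simp
qed

theorem lemma2p5:
  fixes X :: "'k::field ppoint set" and s :: nat and d :: "nat \<Rightarrow> nat"
    and Xs Ls :: "nat \<Rightarrow> 'k ppoint set" and L :: "'k ppoint set"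
  assumes "alg_closed TYPE('k)"
    and "kconfig X s d Xs Ls"
    and "is_line L"
    and "card (L \<inter> X) = d s"
  shows "(d s > s \<longrightarrow> L \<in> Ls ` {1..s}) \<and>
         (\<forall>i\<in>{1..s}. L = Ls i \<longrightarrow> (\<forall>j\<in>{i..s}. int (d j) = int (d s) - int s + int j))"
proof (intro conjI impI ballI)
  assume "d s > s"
  with assms(4) kconfig_line_not_defining_card_le[OF assms(2,3)] show "L \<in> Ls ` {1..s}"
    by fastforce
next
  fix i j assume i: "i \<in> {1..s}" and "L = Ls i" and j: "j \<in> {i..s}"
  have "d s \<le> d i + (s - i)"
    using kconfig_defining_line_card_le[OF assms(2) i \<open>L = Ls i\<close>] assms(4) by simp
  moreover have "d i + (j - i) \<le> d j" "d j + (s - j) \<le> d s"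
    using kconfig_type_increase[OF assms(2)] i j by auto
  ultimately show "int (d j) = int (d s) - int s + int j" using i j by auto
qed

end
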